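(* Let $(G,k,M^*,M)$ be a critical tuple and fix an edge $e\in E^+(C^+)$. If $e\notin r_b(C_e)$, then there exists a set $\mathcal{Q}$ of forward jumps of $C_e$ such that $C^+=\bigcup_{Q\in\mathcal{Q}} r(Q)\cup\bigcup_{P\in\mathcal{I}_e}P$ and no $Q\in\mathcal{Q}$ satisfies $e\in r(Q)$.
   Context: $R(H)$ is the set of red edges of an edge set $H$. For a perfect matching $M$ of a red/blue edge-colored bipartite graph $G=(A\sqcup B,E)$, $G_M$ is the directed graph on $A\sqcup B$ with edges of $M$ oriented from $A$ to $B$ and other edges from $B$ to $A$, weighted by $w_M(e)=0$ for blue $e$, $-1$ for red $e\in M$, $+1$ for red $e\notin M$; $E^+(H)$ (resp. $E^-(H)$) is the set of red edges of $H$ not in $M$ (resp. in $M$), $w_M(H)=|E^+(H)|-|E^-(H)|$. Paths and cycles are directed and identified with edge sets. For an edge $e$, $M^e$ is a perfect matching containing $e$ with the minimum number of red edges among those containing $e$. A tuple $(G,k,M^*,M)$ is critical if: every edge of $G$ lies in some perfect matching; $|R(M^* )|=k$; $|R(M)|<\frac13k$; every directed cycle $C$ of $G_M$ with $w_M(C)>0$ has $|E^+(C)|>\frac23k$; and $|R(M^e)|<\frac13k$ for every red $e\in M^*\setminus M$. $C^+$ is the unique positive-weight directed cycle of $G_M$ contained in $M\Delta M^*$. For $e\in E^+(C^+)$, $C_e$ is the unique directed cycle of $G_M$ in $M\Delta M^e$ containing $e$. A jump of $C_e$ is a sub-path $Q$ of $C_e$ with endpoints on $C^+$, no inner vertex on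 $C^+$ and $Q\cap C^+=\emptyset$; interjumps are the sub-paths of $C_e$ contained in $C^+$ between consecutive jumps, and $\mathcal{I}_e$ is the set of interjumps of $C_e$. For a jump $Q$, $C_Q$ is the unique directed cycle in $C^+\cup Q$ containing $Q$; $Q$ is forward if $w_M(C_Q)>0$, backward otherwise; reach $r(Q)=C^+\setminus C_Q$ if forward, $r(Q)=C_Q\setminus Q$ if backward. $r_b(C_e)$ is the union of the reaches of all backward jumps of $C_e$. *)

theory Defs
  imports Main
begin

(* Bipartite graph G = (A \<union> B, E), edges (a,b) with a \<in> A, b \<in> B;
   R \<subseteq> E is the set of red edges (the others are blue). *)

type_synonym 'v edge = "'v \<times> 'v"

definition bip_graph :: "'v set \<Rightarrow> 'v set \<Rightarrow> 'v edge set \<Rightarrow> 'v edge set \<Rightarrow> bool" where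
  "bip_graph A B E R \<longleftrightarrow> finite A \<and> finite B \<and> A \<inter> B = {} \<and> E \<subseteq> A \<times> B \<and> R \<subseteq> E"

definition perfect_matching :: "'v set \<Rightarrow> 'v set \<Rightarrow> 'v edge set \<Rightarrow> 'v edge set \<Rightarrow> bool" where
  "perfect_matching A B E M \<longleftrightarrow> M \<subseteq> E \<and>
     (\<forall>v \<in> A \<union> B. \<exists>!x. x \<in> M \<and> (v = fst x \<or> v = snd x))"

definition red :: "'v edge set \<Rightarrow> 'v edge set \<Rightarrow> 'v edge set" where
  "red R H = H \<inter> R"

definition is_min_red_pm :: "'v set \<Rightarrow> 'v set \<Rightarrow> 'v edge set \<Rightarrow> 'v edge set \<Rightarrow> 'v edge \<Rightarrow> 'v edge set \<Rightarrow> bool" where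
  "is_min_red_pm A B E R e N \<longleftrightarrow> perfect_matching A B E N \<and> e \<in> N \<and>
     (\<forall>N'. perfect_matching A B E N' \<and> e \<in> N' \<longrightarrow> card (red R N) \<le> card (red R N'))"

definition arcs :: "'v edge set \<Rightarrow> 'v edge set \<Rightarrow> ('v \<times> 'v) set" where
  "arcs E M = M \<union> {(b, a) | a b. (a, b) \<in> E \<and> (a, b) \<notin> M}"

definition edge_of :: "'v edge set \<Rightarrow> 'v \<Rightarrow> 'v \<Rightarrow> 'v edge" where
  "edge_of E u w = (if (u, w) \<in> E then (u, w) else (w, u))"

definition Eplus :: "'v edge set \<Rightarrow> 'v edge set \<Rightarrow> 'v edge set \<Rightarrow> 'v edge set" where
  "Eplus R M H = (H \<inter> R) - M"

definition Eminus :: "'v edge set \<Rightarrow> 'v edge set \<Rightarrow> 'v edge set \<Rightarrow> 'v edge set" where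
  "Eminus R M H = (H \<inter> R) \<inter> M"

definition wM :: "'v edge set \<Rightarrow> 'v edge set \<Rightarrow> 'v edge set \<Rightarrow> int" where
  "wM R M H = int (card (Eplus R M H)) - int (card (Eminus R M H))"

definition dpath :: "'v edge set \<Rightarrow> 'v edge set \<Rightarrow> 'v list \<Rightarrow> bool" where
  "dpath E M vs \<longleftrightarrow> vs \<noteq> [] \<and> distinct vs \<and>
     (\<forall>i. i + 1 < length vs \<longrightarrow> (vs ! i, vs ! (i + 1)) \<in> arcs E M)"

definition path_edges :: "'v edge set \<Rightarrow> 'v list \<Rightarrow> 'v edge set" where
  "path_edges E vs = {edge_of E (vs ! i) (vs ! (i + 1)) | i. i + 1 < length vs}"

definition dcycle :: "'v edge set \<Rightarrow> 'v edge set \<Rightarrow> 'v list \<Rightarrow> bool" where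
  "dcycle E M vs \<longleftrightarrow> length vs \<ge> 2 \<and> distinct vs \<and>
     (\<forall>i < length vs. (vs ! i, vs ! ((i + 1) mod length vs)) \<in> arcs E M)"

definition cycle_edges :: "'v edge set \<Rightarrow> 'v list \<Rightarrow> 'v edge set" where
  "cycle_edges E vs = {edge_of E (vs ! i) (vs ! ((i + 1) mod length vs)) | i. i < length vs}"

definition is_dcycle :: "'v edge set \<Rightarrow> 'v edge set \<Rightarrow> 'v edge set \<Rightarrow> bool" where
  "is_dcycle E M C \<longleftrightarrow> (\<exists>vs. dcycle E M vs \<and> C = cycle_edges E vs)"

definition verts :: "'v edge set \<Rightarrow> 'v set" where
  "verts H = fst ` H \<union> snd ` H"

definition symdiff :: "'a set \<Rightarrow> 'a set \<Rightarrow> 'a set" where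
  "symdiff X Y = (X - Y) \<union> (Y - X)"

(* critical tuple (G,k,M^*,M), with M^e given by the choice function Me *)
definition critical ::
  "'v set \<Rightarrow> 'v set \<Rightarrow> 'v edge set \<Rightarrow> 'v edge set \<Rightarrow> nat \<Rightarrow> 'v edge set \<Rightarrow> 'v edge set
   \<Rightarrow> ('v edge \<Rightarrow> 'v edge set) \<Rightarrow> bool" where
  "critical A B E R k Mstar M Me \<longleftrightarrow>
     bip_graph A B E R \<and> perfect_matching A B E Mstar \<and> perfect_matching A B E M \<and>
     (\<forall>e \<in> E. \<exists>N. perfect_matching A B E N \<and> e \<in> N) \<and>
     card (red R Mstar) = k \<and>
     3 * card (red R M) < k \<and>
     (\<forall>C. is_dcycle E M C \<and> wM R M C > 0 \<longrightarrow> 3 * card (Eplus R M C) > 2 * k) \<and>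
     (\<forall>e \<in> red R (Mstar - M). 3 * card (red R (Me e)) < k)"

definition Cplus :: "'v edge set \<Rightarrow> 'v edge set \<Rightarrow> 'v edge set \<Rightarrow> 'v edge set \<Rightarrow> 'v edge set" where
  "Cplus E R M Mstar = (THE C. is_dcycle E M C \<and> C \<subseteq> symdiff M Mstar \<and> wM R M C > 0)"

definition Ce :: "'v edge set \<Rightarrow> 'v edge set \<Rightarrow> ('v edge \<Rightarrow> 'v edge set) \<Rightarrow> 'v edge \<Rightarrow> 'v edge set" where
  "Ce E M Me e = (THE C. is_dcycle E M C \<and> C \<subseteq> symdiff M (Me e) \<and> e \<in> C)"

definition is_jump :: "'v edge set \<Rightarrow> 'v edge set \<Rightarrow> 'v edge set \<Rightarrow> 'v edge set \<Rightarrow> 'v edge set \<Rightarrow> bool" where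
  "is_jump E M Cp C Q \<longleftrightarrow> (\<exists>vs. dpath E M vs \<and> length vs \<ge> 2 \<and> Q = path_edges E vs \<and> Q \<subseteq> C \<and>
      hd vs \<in> verts Cp \<and> last vs \<in> verts Cp \<and> set (butlast (tl vs)) \<inter> verts Cp = {} \<and>
      Q \<inter> Cp = {})"

(* interjumps: the (maximal) sub-paths of C contained in Cp, i.e. the pieces of C
   between consecutive jumps *)
definition interjumps :: "'v edge set \<Rightarrow> 'v edge set \<Rightarrow> 'v edge set \<Rightarrow> 'v edge set \<Rightarrow> 'v edge set set" where
  "interjumps E M Cp C = {P. (\<exists>vs. dpath E M vs \<and> P = path_edges E vs) \<and> P \<subseteq> C \<inter> Cp \<and>
      \<not> (\<exists>ws. dpath E M ws \<and> path_edges E ws \<subseteq> C \<inter> Cp \<and> P \<subset> path_edges E ws)}"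

definition CQ :: "'v edge set \<Rightarrow> 'v edge set \<Rightarrow> 'v edge set \<Rightarrow> 'v edge set \<Rightarrow> 'v edge set" where
  "CQ E M Cp Q = (THE C. is_dcycle E M C \<and> C \<subseteq> Cp \<union> Q \<and> Q \<subseteq> C)"

definition forward_jump :: "'v edge set \<Rightarrow> 'v edge set \<Rightarrow> 'v edge set \<Rightarrow> 'v edge set \<Rightarrow> 'v edge set \<Rightarrow> bool" where
  "forward_jump E R M Cp Q \<longleftrightarrow> wM R M (CQ E M Cp Q) > 0"

definition reach :: "'v edge set \<Rightarrow> 'v edge set \<Rightarrow> 'v edge set \<Rightarrow> 'v edge set \<Rightarrow> 'v edge set \<Rightarrow> 'v edge set" where
  "reach E R M Cp Q = (if forward_jump E R M Cp Q then Cp - CQ E M Cp Q else CQ E M Cp Q - Q)"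

definition reach_back :: "'v edge set \<Rightarrow> 'v edge set \<Rightarrow> 'v edge set \<Rightarrow> 'v edge set \<Rightarrow> 'v edge set \<Rightarrow> 'v edge set" where
  "reach_back E R M Cp C = \<Union> {reach E R M Cp Q | Q. is_jump E M Cp C Q \<and> \<not> forward_jump E R M Cp Q}"

end

theory Submission
  imports Defs
begin

(*
  In G_M the arcs of the symmetric difference of M with another perfect matching N
  give every vertex of M \<Delta> N exactly one outgoing and one incoming arc, so M \<Delta> N
  splits into vertex-disjoint directed cycles, the orbits of an "alternating successor".
  This makes C_e well defined, and C^+ as well: a second positive cycle in M \<Delta> M^*
  would be disjoint from C^+, and the two would contain more than k red edges of M^*.

  Rotate C^+ and C_e so that both start with the head of e and end with its tail.
  An edge x of C^+ that also lies on C_e belongs to a maximal common path, an interjump.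
  Otherwise x joins positions p and p + 1 of C^+; the last vertex of C_e on C^+[0..p]
  and the next vertex of C_e on C^+ bound a jump Q, and C_Q is C^+ with the segment
  through x replaced by Q. So x is not on C_Q while e is. A backward Q would put e into
  r(Q) = C_Q - Q, which is excluded, hence Q is forward, x lies in r(Q) = C^+ - C_Q,
  and e does not.
*)

section \<open>Cycles of a map\<close>

definition is_cycle_of :: "('a \<Rightarrow> 'a) \<Rightarrow> 'a list \<Rightarrow> bool" where
  "is_cycle_of g zs \<longleftrightarrow> (\<forall>i<length zs. zs ! ((i + 1) mod length zs) = g (zs ! i))"

lemma is_cycle_of_funpow:
  assumes "is_cycle_of g zs" and j: "j < length zs"
  shows "(g ^^ k) (zs ! j) = zs ! ((j + k) mod length zs)"
proof (induction k)
  case 0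
  then show ?case using j by simp
next
  case (Suc k)
  have "(g ^^ Suc k) (zs ! j) = g (zs ! ((j + k) mod length zs))"
    using Suc by simp
  moreover have "(j + k) mod length zs < length zs"
    using j by (intro mod_less_divisor) linarith
  ultimately have "(g ^^ Suc k) (zs ! j) = zs ! (((j + k) mod length zs + 1) mod length zs)"
    using assms(1) unfolding is_cycle_of_def by simp
  also have "\<dots> = zs ! ((j + Suc k) mod length zs)"
    by (simp add: mod_Suc_eq)
  finally show ?case .
qed

lemma is_cycle_of_set_eq_orbit:
  assumes cyc: "is_cycle_of g zs" and y: "y \<in> set zs"
  shows "set zs = range (\<lambda>k. (g ^^ k) y)"
proof -
  obtain j where j: "j < length zs" "y = zs ! j"
    using y by (auto simp: in_set_conv_nth)
  have "zs ! i \<in> range (\<lambda>k. (g ^^ k) y)" if "i < length zs" for i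
  proof
    show "zs ! i = (g ^^ (i + length zs - j)) y"
      using is_cycle_of_funpow[OF cyc j(1), of "i + length zs - j"] j that by simp
  qed simp
  then have "set zs \<subseteq> range (\<lambda>k. (g ^^ k) y)"
    by (auto simp: in_set_conv_nth)
  moreover have "range (\<lambda>k. (g ^^ k) y) \<subseteq> set zs"
    using is_cycle_of_funpow[OF cyc j(1)] j
    by (auto intro!: nth_mem mod_less_divisor[of "length zs"] simp del: mod_less_divisor)
  ultimately show ?thesis by blast
qed

lemma cycle_edges_is_cycle_of:
  assumes "is_cycle_of g zs"
  shows "cycle_edges E zs = (\<lambda>y. edge_of E y (g y)) ` set zs"
proof
  show "cycle_edges E zs \<subseteq> (\<lambda>y. edge_of E y (g y)) ` set zs"
    using assms unfolding cycle_edges_def is_cycle_of_def by auto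
  show "(\<lambda>y. edge_of E y (g y)) ` set zs \<subseteq> cycle_edges E zs"
    using assms unfolding cycle_edges_def is_cycle_of_def by (auto simp: in_set_conv_nth) metis
qed

lemma cycle_edges_eq_if_common_vertex:
  assumes "is_cycle_of g zs" "is_cycle_of g ws" "y \<in> set zs" "y \<in> set ws"
  shows "cycle_edges E zs = cycle_edges E ws"
  using assms cycle_edges_is_cycle_of is_cycle_of_set_eq_orbit by metis

lemma is_cycle_of_image:
  assumes "is_cycle_of g zs"
  shows "g ` set zs = set zs"
proof
  show "g ` set zs \<subseteq> set zs"
    using assms unfolding is_cycle_of_def
    by (auto simp: in_set_conv_nth) (metis mod_less_divisor nth_mem gr_implies_not0 not_gr0)
  show "set zs \<subseteq> g ` set zs"
  proof
    fix y assume "y \<in> set zs"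
    then obtain j where j: "j < length zs" "y = zs ! j"
      by (auto simp: in_set_conv_nth)
    have n: "0 < length zs"
      using j by linarith
    define i where "i = (j + length zs - 1) mod length zs"
    have "i < length zs"
      unfolding i_def using n by simp
    moreover have "(i + 1) mod length zs = (j + length zs) mod length zs"
      unfolding i_def using n by (simp add: mod_Suc_eq)
    ultimately have "i < length zs" "(i + 1) mod length zs = j"
      using j by auto
    then show "y \<in> g ` set zs"
      using assms j unfolding is_cycle_of_def by (metis image_eqI nth_mem)
  qed
qed

lemma funpow_mem_orbit:
  assumes "y \<in> range (\<lambda>k. (g ^^ k) u)"
  shows "(g ^^ s) y \<in> range (\<lambda>k. (g ^^ k) u)"
proof -
  obtain k where "y = (g ^^ k) u"
    using assms by blast
  then have "(g ^^ s) y = (g ^^ (s + k)) u"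
    by (simp add: funpow_add)
  then show ?thesis
    by simp
qed

lemma periodic_point_cycle:
  assumes "(g ^^ p) x = x" "0 < p"
  obtains zs where "distinct zs" "x \<in> set zs" "is_cycle_of g zs" "g x \<noteq> x \<Longrightarrow> length zs \<ge> 2"
proof -
  define q where "q = (LEAST q. 0 < q \<and> (g ^^ q) x = x)"
  have q: "0 < q" "(g ^^ q) x = x"
    unfolding q_def using LeastI[of "\<lambda>q. 0 < q \<and> (g ^^ q) x = x" p] assms by auto
  have minimal: "(g ^^ m) x \<noteq> x" if "0 < m" "m < q" for m
    using that not_less_Least unfolding q_def by blast
  define zs where "zs = map (\<lambda>i. (g ^^ i) x) [0..<q]"
  have len: "length zs = q" and nth: "\<And>i. i < q \<Longrightarrow> zs ! i = (g ^^ i) x"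
    unfolding zs_def by simp_all
  have "distinct zs"
    unfolding zs_def distinct_map using inj_on_funpow_least[OF q(2) minimal] by simp
  moreover have "x \<in> set zs"
    using q(1) nth[of 0] len by (metis funpow_0 nth_mem)
  moreover have "is_cycle_of g zs"
    unfolding is_cycle_of_def len
  proof (intro allI impI)
    fix i assume "i < q"
    then show "zs ! ((i + 1) mod q) = g (zs ! i)"
      using q nth by (cases "i + 1 = q") auto
  qed
  moreover have "length zs \<ge> 2" if "g x \<noteq> x"
    using q that len by (cases "q = 1") auto
  ultimately show thesis using that by blast
qed

lemma inj_on_periodic:
  assumes "finite S" "f ` S \<subseteq> S" "inj_on f S" "y \<in> S"
  obtains p where "0 < p" "(f ^^ p) y = y"
proof -
  have orbit: "(f ^^ k) y \<in> S" for k
    by (induction k) (use assms in auto)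
  have "\<not> inj_on (\<lambda>k. (f ^^ k) y) {0..card S}"
  proof
    assume "inj_on (\<lambda>k. (f ^^ k) y) {0..card S}"
    then have "card {0..card S} \<le> card S"
      using assms(1) orbit by (intro card_inj_on_le) auto
    then show False by simp
  qed
  then obtain i j where ij: "i < j" "(f ^^ i) y = (f ^^ j) y"
    unfolding inj_on_def by (metis linorder_neqE_nat)
  have cancel: "(f ^^ (i' + d)) y = (f ^^ i') y \<Longrightarrow> (f ^^ d) y = y" for i' d
  proof (induction i')
    case (Suc i')
    then have "(f ^^ (i' + d)) y = (f ^^ i') y"
      using assms(3) orbit by (simp add: inj_on_eq_iff)
    then show ?case using Suc.IH by simp
  qed simp
  show thesis
    using that[of "j - i"] cancel[of i "j - i"] ij by simp
qed

section \<open>Segments of lists\<close>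

lemma set_butlast_conv_nth: "set (butlast xs) = {xs ! i | i. i + 1 < length xs}"
proof
  show "set (butlast xs) \<subseteq> {xs ! i | i. i + 1 < length xs}"
  proof
    fix y assume "y \<in> set (butlast xs)"
    then obtain i where "i < length (butlast xs)" "y = butlast xs ! i"
      by (auto simp: in_set_conv_nth)
    then have "i + 1 < length xs" "y = xs ! i"
      by (simp_all add: nth_butlast)
    then show "y \<in> {xs ! i | i. i + 1 < length xs}" by blast
  qed
  show "{xs ! i | i. i + 1 < length xs} \<subseteq> set (butlast xs)"
  proof
    fix y assume "y \<in> {xs ! i | i. i + 1 < length xs}"
    then obtain i where "i + 1 < length xs" "y = xs ! i" by blast
    then have "i < length (butlast xs)" "y = butlast xs ! i"
      by (simp_all add: nth_butlast)
    then show "y \<in> set (butlast xs)" by simp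
  qed
qed

lemma set_butlast_tl_conv_nth: "set (butlast (tl xs)) = {xs ! i | i. 0 < i \<and> i + 1 < length xs}"
proof -
  have "set (butlast (tl xs)) = {tl xs ! i | i. i + 1 < length (tl xs)}"
    by (rule set_butlast_conv_nth)
  also have "\<dots> = {xs ! i | i. 0 < i \<and> i + 1 < length xs}"
  proof (intro equalityI subsetI)
    fix y assume "y \<in> {tl xs ! i | i. i + 1 < length (tl xs)}"
    then obtain i where "i + 1 < length (tl xs)" "y = tl xs ! i" by blast
    then have "0 < Suc i \<and> Suc i + 1 < length xs \<and> y = xs ! Suc i"
      by (simp add: nth_tl)
    then show "y \<in> {xs ! i | i. 0 < i \<and> i + 1 < length xs}" by blast
  next
    fix y assume "y \<in> {xs ! i | i. 0 < i \<and> i + 1 < length xs}"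
    then obtain i where "0 < i" "i + 1 < length xs" "y = xs ! i" by blast
    then have "i - 1 + 1 < length (tl xs) \<and> y = tl xs ! (i - 1)"
      by (simp add: nth_tl)
    then show "y \<in> {tl xs ! i | i. i + 1 < length (tl xs)}" by blast
  qed
  finally show ?thesis .
qed

lemma the_inv_into_nth:
  "distinct xs \<Longrightarrow> i < length xs \<Longrightarrow> the_inv_into {..<length xs} ((!) xs) (xs ! i) = i"
  by (simp add: the_inv_into_f_f inj_on_nth)

lemma rotate_cycle_edges:
  assumes n: "0 < length xs"
  shows "cycle_edges E (rotate k xs) = cycle_edges E xs"
proof -
  let ?n = "length xs"
  have r: "rotate k xs ! j = xs ! ((k + j) mod ?n)"
    and r1: "rotate k xs ! ((j + 1) mod ?n) = xs ! (((k + j) mod ?n + 1) mod ?n)" if "j < ?n" for j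
    using that n by (simp_all add: nth_rotate mod_simps)
  show ?thesis
  proof
    show "cycle_edges E (rotate k xs) \<subseteq> cycle_edges E xs"
      unfolding cycle_edges_def using r r1 n by auto
  next
    show "cycle_edges E xs \<subseteq> cycle_edges E (rotate k xs)"
    proof
      fix y assume "y \<in> cycle_edges E xs"
      then obtain i where i: "i < ?n" "y = edge_of E (xs ! i) (xs ! ((i + 1) mod ?n))"
        unfolding cycle_edges_def by auto
      define j where "j = (i + ?n - k mod ?n) mod ?n"
      have j: "j < ?n"
        using n by (simp add: j_def)
      have "(k + j) mod ?n = (k mod ?n + (i + ?n - k mod ?n)) mod ?n"
        unfolding j_def by (simp add: mod_simps)
      also have "k mod ?n + (i + ?n - k mod ?n) = i + ?n"
        using mod_less_divisor[OF n, of k] by linarith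
      finally have "(k + j) mod ?n = i"
        using i by simp
      then have "y = edge_of E (rotate k xs ! j) (rotate k xs ! ((j + 1) mod length (rotate k xs)))"
        using r[OF j] r1[OF j] i by simp
      then show "y \<in> cycle_edges E (rotate k xs)"
        unfolding cycle_edges_def using j by auto
    qed
  qed
qed

lemma set_butlast_tl_map_upt:
  assumes "i < j"
  shows "set (butlast (tl (map f [i..<Suc j]))) = f ` {i<..<j}"
proof -
  have "butlast (tl [i..<Suc j]) = [Suc i..<j]"
    using assms by simp
  then show ?thesis
    by (simp add: map_butlast[symmetric] map_tl[symmetric] atLeastSucLessThan_greaterThanLessThan
        del: upt_Suc)
qed

lemma exists_crossing_segment:
  assumes "S \<subseteq> T" "ds ! 0 \<in> S" "ds ! (length ds - 1) \<in> T - S" "0 < length ds"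
  obtains j0 j1 where "j0 < j1" "j1 < length ds" "ds ! j0 \<in> S" "ds ! j1 \<in> T - S"
    "\<And>j. j0 < j \<Longrightarrow> j < j1 \<Longrightarrow> ds ! j \<notin> T"
proof -
  define m where "m = length ds"
  define low where "low = {j. j < m \<and> ds ! j \<in> S}"
  define j0 where "j0 = Max low"
  have "finite low" "0 \<in> low"
    using assms(2,4) unfolding low_def m_def by simp_all
  then have "j0 \<in> low" "\<And>j. j \<in> low \<Longrightarrow> j \<le> j0"
    unfolding j0_def by (auto intro: Max_in Max_ge)
  then have j0: "j0 < m" "ds ! j0 \<in> S" "\<And>j. j < m \<Longrightarrow> ds ! j \<in> S \<Longrightarrow> j \<le> j0"
    unfolding low_def by auto
  have "j0 \<noteq> m - 1"
    using j0(2) assms(3) unfolding m_def by auto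
  define high where "high = {j. j0 < j \<and> j < m \<and> ds ! j \<in> T}"
  define j1 where "j1 = Min high"
  have "finite high" "m - 1 \<in> high"
    using j0(1) \<open>j0 \<noteq> m - 1\<close> assms(3) unfolding high_def m_def by auto
  then have "j1 \<in> high" "\<And>j. j \<in> high \<Longrightarrow> j1 \<le> j"
    unfolding j1_def by (auto intro: Min_in Min_le)
  then have j1: "j0 < j1" "j1 < m" "ds ! j1 \<in> T"
    "\<And>j. j0 < j \<Longrightarrow> j < m \<Longrightarrow> ds ! j \<in> T \<Longrightarrow> j1 \<le> j"
    unfolding high_def by auto
  have "ds ! j1 \<notin> S"
    using j0(3)[OF j1(2)] j1(1) by auto
  moreover have "ds ! j \<notin> T" if "j0 < j" "j < j1" for j
    using j1(2,4) that by fastforce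
  ultimately show thesis
    using that j0(2) j1(1-3) unfolding m_def by blast
qed

section \<open>The digraph G_M\<close>

lemma perfect_matching_subset: "perfect_matching A B E P \<Longrightarrow> P \<subseteq> E"
  unfolding perfect_matching_def by auto

lemma edge_of_in_verts: "edge_of E u w \<in> X \<Longrightarrow> u \<in> verts X \<and> w \<in> verts X"
  unfolding edge_of_def verts_def by (cases "(u, w) \<in> E") force+

lemma finite_cycle_edges: "finite (cycle_edges E zs)"
  unfolding cycle_edges_def by simp

lemma wM_Un_disjoint:
  assumes "finite H1" "finite H2" "H1 \<inter> H2 = {}"
  shows "wM R M (H1 \<union> H2) = wM R M H1 + wM R M H2"
proof -
  have "card (Eplus R M (H1 \<union> H2)) = card (Eplus R M H1) + card (Eplus R M H2)"
    unfolding Eplus_def using assms by (subst card_Un_disjoint[symmetric]) (auto intro: arg_cong[where f = card])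
  moreover have "card (Eminus R M (H1 \<union> H2)) = card (Eminus R M H1) + card (Eminus R M H2)"
    unfolding Eminus_def using assms by (subst card_Un_disjoint[symmetric]) (auto intro: arg_cong[where f = card])
  ultimately show ?thesis unfolding wM_def by simp
qed

locale matching_digraph =
  fixes A B :: "'v set" and E R M :: "'v edge set"
  assumes bip: "bip_graph A B E R" and matching: "perfect_matching A B E M"
begin

lemma finite_E: "finite E" and disjoint_A_B: "A \<inter> B = {}" and E_subset: "E \<subseteq> A \<times> B"
  using bip finite_subset[of E "A \<times> B"] unfolding bip_graph_def by auto

lemma M_subset: "M \<subseteq> E"
  using perfect_matching_subset[OF matching] .

lemma pm_partner_unique:
  assumes P: "perfect_matching A B E P" and "x \<in> P" "y \<in> P"
    and "v = fst x \<or> v = snd x" "v = fst y \<or> v = snd y"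
  shows "x = y"
proof -
  have "v \<in> A \<union> B"
    using assms perfect_matching_subset[OF P] E_subset by auto
  then have "\<exists>!z. z \<in> P \<and> (v = fst z \<or> v = snd z)"
    using P unfolding perfect_matching_def by blast
  then show ?thesis
    using assms by blast
qed

lemma pm_partner_unique_A:
    "perfect_matching A B E P \<Longrightarrow> (a, b) \<in> P \<Longrightarrow> (a, b') \<in> P \<Longrightarrow> b = b'"
  and pm_partner_unique_B:
    "perfect_matching A B E P \<Longrightarrow> (a, b) \<in> P \<Longrightarrow> (a', b) \<in> P \<Longrightarrow> a = a'"
  using pm_partner_unique[of P "(a, b)" "(a, b')" a] pm_partner_unique[of P "(a, b)" "(a', b)" b] by auto

lemma pm_partner_exists:
  assumes P: "perfect_matching A B E P" and v: "v \<in> A \<union> B"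
  shows "v \<in> A \<Longrightarrow> \<exists>b. (v, b) \<in> P" and "v \<in> B \<Longrightarrow> \<exists>a. (a, v) \<in> P"
proof -
  obtain x where x: "x \<in> P" "v = fst x \<or> v = snd x"
    using P v unfolding perfect_matching_def by blast
  have "x \<in> A \<times> B"
    using x perfect_matching_subset[OF P] E_subset by auto
  then have "v \<in> A \<Longrightarrow> x = (v, snd x)" and "v \<in> B \<Longrightarrow> x = (fst x, v)"
    using x disjoint_A_B by (auto simp: mem_Times_iff)
  then show "v \<in> A \<Longrightarrow> \<exists>b. (v, b) \<in> P" and "v \<in> B \<Longrightarrow> \<exists>a. (a, v) \<in> P"
    using x(1) by metis+
qed

lemma arcs_cases:
  assumes "(u, w) \<in> arcs E M"
  shows "(u, w) \<in> M \<and> u \<in> A \<and> w \<in> B \<and> edge_of E u w = (u, w) \<or>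
         (w, u) \<in> E - M \<and> u \<in> B \<and> w \<in> A \<and> edge_of E u w = (w, u)"
proof -
  have "(u, w) \<in> M \<or> (w, u) \<in> E - M"
    using assms unfolding arcs_def by auto
  then show ?thesis
    using M_subset E_subset disjoint_A_B unfolding edge_of_def by auto
qed

lemma arc_not_loop: "(u, w) \<in> arcs E M \<Longrightarrow> u \<noteq> w"
  using arcs_cases disjoint_A_B by blast

lemma edge_of_arc_in_E: "(u, w) \<in> arcs E M \<Longrightarrow> edge_of E u w \<in> E"
  using arcs_cases M_subset by fastforce

lemma arc_eq_if_edge_of_eq:
  assumes "(u, w) \<in> arcs E M" "(u', w') \<in> arcs E M" "edge_of E u w = edge_of E u' w'"
  shows "u = u' \<and> w = w'"
  using arcs_cases[OF assms(1)] arcs_cases[OF assms(2)] assms(3) by auto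

lemma edge_has_arc:
  assumes "s \<in> E"
  obtains u w where "(u, w) \<in> arcs E M" "edge_of E u w = s"
proof -
  obtain a b where s: "s = (a, b)" by (cases s)
  show thesis
  proof (cases "s \<in> M")
    case True
    then have "(a, b) \<in> arcs E M" "edge_of E a b = s"
      using s M_subset unfolding arcs_def edge_of_def by auto
    then show thesis
      using that by blast
  next
    case False
    then have "(b, a) \<in> arcs E M"
      using s assms unfolding arcs_def by auto
    moreover have "a \<in> A" "b \<in> B"
      using s assms E_subset by auto
    ultimately show thesis
      using that[of b a] arcs_cases[of b a] s disjoint_A_B by auto
  qed
qed

lemma dcycle_arc:
  "dcycle E M zs \<Longrightarrow> i < length zs \<Longrightarrow> (zs ! i, zs ! ((i + 1) mod length zs)) \<in> arcs E M"
  unfolding dcycle_def by auto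

lemma cycle_edges_obtain:
  assumes "x \<in> cycle_edges E zs"
  obtains i where "i < length zs" "x = edge_of E (zs ! i) (zs ! ((i + 1) mod length zs))"
  using assms unfolding cycle_edges_def by auto

lemma verts_cycle_edges:
  assumes "dcycle E M zs"
  shows "verts (cycle_edges E zs) = set zs"
proof
  have "length zs > 0"
    using assms unfolding dcycle_def by auto
  show "verts (cycle_edges E zs) \<subseteq> set zs"
  proof
    fix y assume "y \<in> verts (cycle_edges E zs)"
    then obtain s where s: "s \<in> cycle_edges E zs" "y = fst s \<or> y = snd s"
      unfolding verts_def by blast
    obtain i where "i < length zs" "s = edge_of E (zs ! i) (zs ! ((i + 1) mod length zs))"
      by (rule cycle_edges_obtain[OF s(1)])
    then have "i < length zs" "y = zs ! i \<or> y = zs ! ((i + 1) mod length zs)"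
      using s(2) unfolding edge_of_def by (auto split: if_splits)
    then show "y \<in> set zs"
      using \<open>length zs > 0\<close> by (auto intro!: nth_mem)
  qed
  show "set zs \<subseteq> verts (cycle_edges E zs)"
  proof
    fix y assume "y \<in> set zs"
    then obtain i where i: "i < length zs" "y = zs ! i"
      by (auto simp: in_set_conv_nth)
    then have "edge_of E y (zs ! ((i + 1) mod length zs)) \<in> cycle_edges E zs"
      unfolding cycle_edges_def by blast
    then show "y \<in> verts (cycle_edges E zs)"
      using edge_of_in_verts by metis
  qed
qed

lemma cycle_edges_subset_E:
  assumes "dcycle E M zs"
  shows "cycle_edges E zs \<subseteq> E"
proof
  fix x assume "x \<in> cycle_edges E zs"
  then obtain i where "i < length zs" "x = edge_of E (zs ! i) (zs ! ((i + 1) mod length zs))"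
    by (rule cycle_edges_obtain)
  then show "x \<in> E"
    using dcycle_arc[OF assms] edge_of_arc_in_E by simp
qed

lemma dcycle_of_periodic_successor:
  assumes "(g ^^ p) u = u" "0 < p" and arcs: "\<And>k. ((g ^^ k) u, g ((g ^^ k) u)) \<in> arcs E M"
  obtains zs where "dcycle E M zs" "set zs = range (\<lambda>k. (g ^^ k) u)" "is_cycle_of g zs"
proof -
  have "g u \<noteq> u"
    using arc_not_loop arcs[of 0] by force
  then obtain zs where zs: "distinct zs" "u \<in> set zs" "is_cycle_of g zs" "length zs \<ge> 2"
    using periodic_point_cycle[OF assms(1,2)] by metis
  have orbit: "set zs = range (\<lambda>k. (g ^^ k) u)"
    using is_cycle_of_set_eq_orbit[OF zs(3,2)] .
  have "dcycle E M zs"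
    unfolding dcycle_def
  proof (intro conjI allI impI)
    fix i assume "i < length zs"
    then have "zs ! i \<in> range (\<lambda>k. (g ^^ k) u)" and "zs ! ((i + 1) mod length zs) = g (zs ! i)"
      using orbit zs(3) unfolding is_cycle_of_def by auto
    then show "(zs ! i, zs ! ((i + 1) mod length zs)) \<in> arcs E M"
      using arcs by auto
  qed (use zs in auto)
  then show thesis
    using that orbit zs(3) by blast
qed

lemma cycle_edge_index_inj:
  assumes cs: "dcycle E M cs" and r: "r < length cs" "r' < length cs"
    and eq: "edge_of E (cs ! r) (cs ! ((r + 1) mod length cs))
           = edge_of E (cs ! r') (cs ! ((r' + 1) mod length cs))"
  shows "r = r'"
proof -
  have "cs ! r = cs ! r'"
    using arc_eq_if_edge_of_eq[OF dcycle_arc[OF cs r(1)] dcycle_arc[OF cs r(2)] eq] by simp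
  then show ?thesis
    using nth_eq_iff_index_eq cs r unfolding dcycle_def by blast
qed

lemma dcycle_rotate:
  assumes "dcycle E M xs"
  shows "dcycle E M (rotate k xs)"
proof -
  let ?n = "length xs"
  have n: "0 < ?n"
    using assms unfolding dcycle_def by linarith
  have "rotate k xs ! j = xs ! ((k + j) mod ?n)"
    and "rotate k xs ! ((j + 1) mod ?n) = xs ! (((k + j) mod ?n + 1) mod ?n)" if "j < ?n" for j
    using that n by (simp_all add: nth_rotate mod_simps)
  then show ?thesis
    using assms n unfolding dcycle_def by auto
qed

lemma dcycle_rotate_to_arc:
  assumes zs: "dcycle E M zs" and th: "(t, h) \<in> arcs E M" and e: "edge_of E t h \<in> cycle_edges E zs"
  obtains zs' where "dcycle E M zs'" "cycle_edges E zs' = cycle_edges E zs"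
    "zs' ! 0 = h" "zs' ! (length zs' - 1) = t"
proof -
  define n where "n = length zs"
  have n: "n \<ge> 2"
    using zs unfolding dcycle_def n_def by simp
  obtain i where i: "i < n" "edge_of E t h = edge_of E (zs ! i) (zs ! ((i + 1) mod n))"
    using cycle_edges_obtain[OF e] n_def by blast
  then have ti: "zs ! i = t" and hi: "zs ! ((i + 1) mod n) = h"
    using arc_eq_if_edge_of_eq[OF th dcycle_arc[OF zs]] n_def by auto
  define zs' where "zs' = rotate (i + 1) zs"
  have len: "length zs' = n"
    unfolding zs'_def n_def by simp
  have r: "zs' ! j = zs ! ((i + 1 + j) mod n)" if "j < n" for j
    unfolding zs'_def n_def using that nth_rotate n_def by blast
  have "zs' ! 0 = h"
    using r[of 0] n hi by simp
  moreover have "zs' ! (length zs' - 1) = t"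
    using r[of "n - 1"] n ti i(1) len by simp
  moreover have "dcycle E M zs'"
    unfolding zs'_def by (rule dcycle_rotate[OF zs])
  moreover have "cycle_edges E zs' = cycle_edges E zs"
    unfolding zs'_def using n n_def by (intro rotate_cycle_edges) auto
  ultimately show thesis
    using that by blast
qed

lemma dcycle_segment:
  assumes ds: "dcycle E M ds" and ij: "i < j" "j < length ds"
  defines "qs \<equiv> map ((!) ds) [i..<Suc j]"
  shows "dpath E M qs" "length qs \<ge> 2" "path_edges E qs \<subseteq> cycle_edges E ds"
    "hd qs = ds ! i" "last qs = ds ! j" "set (butlast (tl qs)) = (!) ds ` {i<..<j}"
proof -
  have len: "length qs = Suc j - i" and nth: "r < Suc j - i \<Longrightarrow> qs ! r = ds ! (i + r)" for r
    unfolding qs_def by (simp_all add: nth_map_upt del: upt_Suc)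
  have succ_index: "(i + r + 1) mod length ds = i + (r + 1)" if "r + 1 < Suc j - i" for r
    using that ij by simp
  have "distinct qs"
    using ds ij unfolding qs_def dcycle_def
    by (simp add: distinct_map inj_on_def nth_eq_iff_index_eq del: upt_Suc)
  moreover have "(qs ! r, qs ! (r + 1)) \<in> arcs E M" if "r + 1 < length qs" for r
    using dcycle_arc[OF ds, of "i + r"] that ij nth succ_index len by simp
  ultimately show "dpath E M qs"
    unfolding dpath_def using ij len by auto
  show "length qs \<ge> 2"
    using ij len by simp
  show "path_edges E qs \<subseteq> cycle_edges E ds"
  proof
    fix y assume "y \<in> path_edges E qs"
    then obtain r where r: "r + 1 < length qs" "y = edge_of E (qs ! r) (qs ! (r + 1))"
      unfolding path_edges_def by blast
    then have "y = edge_of E (ds ! (i + r)) (ds ! ((i + r + 1) mod length ds))" "i + r < length ds"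
      using nth succ_index len ij by simp_all
    then show "y \<in> cycle_edges E ds"
      unfolding cycle_edges_def by blast
  qed
  show "hd qs = ds ! i" "last qs = ds ! j"
    using ij unfolding qs_def by (simp_all add: hd_map last_map del: upt_Suc)
  show "set (butlast (tl qs)) = (!) ds ` {i<..<j}"
    unfolding qs_def using ij(1) by (rule set_butlast_tl_map_upt)
qed

lemma exists_jump_across:
  assumes cs: "dcycle E M cs" and ds: "dcycle E M ds"
    and first: "ds ! 0 = cs ! 0" and last: "ds ! (length ds - 1) = cs ! (length cs - 1)"
    and p: "p + 1 < length cs"
  obtains qs a b where "dpath E M qs" "length qs \<ge> 2" "path_edges E qs \<subseteq> cycle_edges E ds"
    "hd qs = cs ! a" "last qs = cs ! b" "a \<le> p" "p < b" "b < length cs"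
    "set (butlast (tl qs)) \<inter> set cs = {}"
proof -
  have "distinct cs" "length ds \<ge> 2"
    using cs ds unfolding dcycle_def by auto
  have "cs ! (length cs - 1) \<notin> (!) cs ` {..p}"
  proof
    assume "cs ! (length cs - 1) \<in> (!) cs ` {..p}"
    then obtain r where "r \<le> p" "cs ! (length cs - 1) = cs ! r"
      by auto
    then show False
      using nth_eq_iff_index_eq[OF \<open>distinct cs\<close>, of "length cs - 1" r] p by simp
  qed
  moreover have "cs ! (length cs - 1) \<in> set cs"
    using p by simp
  ultimately have ds_last: "ds ! (length ds - 1) \<in> set cs - (!) cs ` {..p}"
    using last by simp
  have "(!) cs ` {..p} \<subseteq> set cs"
    using p by auto
  moreover have "ds ! 0 \<in> (!) cs ` {..p}"
    using first by simp
  moreover have "0 < length ds"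
    using \<open>length ds \<ge> 2\<close> by linarith
  ultimately obtain j0 j1 where j: "j0 < j1" "j1 < length ds" "ds ! j0 \<in> (!) cs ` {..p}"
    "ds ! j1 \<in> set cs - (!) cs ` {..p}" "\<And>j. j0 < j \<Longrightarrow> j < j1 \<Longrightarrow> ds ! j \<notin> set cs"
    using exists_crossing_segment[of "(!) cs ` {..p}" "set cs" ds] ds_last by blast
  obtain a where a: "a \<le> p" "ds ! j0 = cs ! a"
    using j(3) by auto
  obtain b where b: "b < length cs" "ds ! j1 = cs ! b"
    using j(4) by (auto simp: in_set_conv_nth)
  have "p < b"
  proof (rule ccontr)
    assume "\<not> p < b"
    then have "ds ! j1 \<in> (!) cs ` {..p}"
      using b(2) by auto
    then show False
      using j(4) by blast
  qed
  show thesis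
  proof (rule that)
    show "set (butlast (tl (map ((!) ds) [j0..<Suc j1]))) \<inter> set cs = {}"
      using dcycle_segment(6)[OF ds j(1,2)] j(5) by auto
  qed (use dcycle_segment[OF ds j(1,2)] a b \<open>p < b\<close> in auto)
qed

lemma is_jump_of_segment:
  assumes cs: "dcycle E M cs" and qs: "dpath E M qs" "length qs \<ge> 2" "path_edges E qs \<subseteq> C"
    and "hd qs \<in> set cs" "last qs \<in> set cs" "set (butlast (tl qs)) \<inter> set cs = {}"
    and "path_edges E qs \<inter> cycle_edges E cs = {}"
  shows "is_jump E M (cycle_edges E cs) C (path_edges E qs)"
  unfolding is_jump_def verts_cycle_edges[OF cs] using assms by blast

lemma non_shared_edge_not_closing:
  assumes cs: "dcycle E M cs" and ds: "dcycle E M ds"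
    and first: "ds ! 0 = cs ! 0" and last: "ds ! (length ds - 1) = cs ! (length cs - 1)"
    and x: "x \<in> cycle_edges E cs" "x \<notin> cycle_edges E ds"
  obtains p where "p + 1 < length cs" "x = edge_of E (cs ! p) (cs ! (p + 1))"
proof -
  define n m where "n = length cs" and "m = length ds"
  have "n \<ge> 2" "m \<ge> 2"
    using cs ds unfolding dcycle_def n_def m_def by auto
  then have "m - 1 + 1 = m" "n - 1 + 1 = n" "m - 1 < m"
    by linarith+
  have "edge_of E (ds ! (m - 1)) (ds ! ((m - 1 + 1) mod m)) \<in> cycle_edges E ds"
    unfolding cycle_edges_def m_def using \<open>m - 1 < m\<close> m_def by blast
  then have closing: "edge_of E (cs ! (n - 1)) (cs ! 0) \<in> cycle_edges E ds"
    using first last \<open>m - 1 + 1 = m\<close> unfolding n_def m_def by simp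
  obtain p where p: "p < n" "x = edge_of E (cs ! p) (cs ! ((p + 1) mod n))"
    using cycle_edges_obtain[OF x(1)] n_def by blast
  have "p \<noteq> n - 1"
    using closing p x(2) \<open>n - 1 + 1 = n\<close> by auto
  then have "p + 1 < n"
    using p(1) by linarith
  then show thesis
    using that p(2) unfolding n_def by simp
qed

lemma interjump_through:
  assumes C: "finite C" and y: "y \<in> C" "y \<in> Cp" "y \<in> E"
  obtains P where "P \<in> interjumps E M Cp C" "y \<in> P"
proof -
  define paths where
    "paths = {P. (\<exists>vs. dpath E M vs \<and> P = path_edges E vs) \<and> P \<subseteq> C \<inter> Cp \<and> y \<in> P}"
  obtain u w where uw: "(u, w) \<in> arcs E M" "edge_of E u w = y"
    using edge_has_arc[OF y(3)] by blast
  have "dpath E M [u, w]"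
    unfolding dpath_def using uw arc_not_loop by (simp add: less_Suc_eq)
  moreover have "path_edges E [u, w] = {y}"
    unfolding path_edges_def using uw by auto
  ultimately have "{y} \<in> paths"
    unfolding paths_def using y by blast
  moreover have "finite paths"
    by (rule finite_subset[of _ "Pow (C \<inter> Cp)"]) (use C in \<open>auto simp: paths_def\<close>)
  ultimately obtain P where P: "P \<in> paths" "\<forall>P' \<in> paths. P \<subseteq> P' \<longrightarrow> P = P'"
    using finite_has_maximal by blast
  then have "P \<in> interjumps E M Cp C"
    unfolding interjumps_def paths_def by blast
  then show thesis
    using that P(1) unfolding paths_def by blast
qed

end

section \<open>Alternating cycles of two perfect matchings\<close>

locale matching_pair = matching_digraph +
  fixes N :: "'v edge set"
  assumes matching_N: "perfect_matching A B E N"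
begin

definition alt_arc :: "'v \<Rightarrow> 'v \<Rightarrow> bool" where
  "alt_arc y z \<longleftrightarrow> (y, z) \<in> arcs E M \<and> edge_of E y z \<in> symdiff M N"

definition alt_succ :: "'v \<Rightarrow> 'v" where
  "alt_succ y = (THE z. alt_arc y z)"

lemma symdiff_subset_E: "symdiff M N \<subseteq> E"
  using M_subset perfect_matching_subset[OF matching_N] unfolding symdiff_def by auto

lemma alt_arc_iff: "alt_arc y z \<longleftrightarrow> (y, z) \<in> M - N \<or> (z, y) \<in> N - M"
proof
  assume "alt_arc y z"
  then show "(y, z) \<in> M - N \<or> (z, y) \<in> N - M"
    using arcs_cases[of y z] unfolding alt_arc_def symdiff_def by auto
next
  assume yz: "(y, z) \<in> M - N \<or> (z, y) \<in> N - M"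
  then show "alt_arc y z"
  proof
    assume "(y, z) \<in> M - N"
    then show "alt_arc y z"
      using M_subset unfolding alt_arc_def arcs_def symdiff_def edge_of_def by auto
  next
    assume zy: "(z, y) \<in> N - M"
    then have "(z, y) \<in> E" "y \<notin> A"
      using perfect_matching_subset[OF matching_N] E_subset disjoint_A_B by auto
    then have "(y, z) \<notin> E"
      using E_subset by auto
    then show "alt_arc y z"
      using zy \<open>(z, y) \<in> E\<close> unfolding alt_arc_def arcs_def symdiff_def edge_of_def by auto
  qed
qed

lemma matched_in_A_B: "(a, b) \<in> M \<union> N \<Longrightarrow> a \<in> A \<and> a \<notin> B \<and> b \<in> B \<and> b \<notin> A"
  using M_subset perfect_matching_subset[OF matching_N] E_subset disjoint_A_B by auto

lemma alt_arc_unique: "alt_arc y z \<Longrightarrow> alt_arc y z' \<Longrightarrow> z = z'"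
  and alt_arc_inj: "alt_arc y z \<Longrightarrow> alt_arc y' z \<Longrightarrow> y = y'"
  unfolding alt_arc_iff
  using pm_partner_unique_A[OF matching] pm_partner_unique_B[OF matching]
    pm_partner_unique_A[OF matching_N] pm_partner_unique_B[OF matching_N] matched_in_A_B
  by (metis DiffE UnI1 UnI2)+

lemma alt_arc_exists:
  assumes y: "y \<in> verts (symdiff M N)"
  shows "\<exists>z. alt_arc y z"
proof -
  obtain s where s: "s \<in> symdiff M N" "y = fst s \<or> y = snd s"
    using y unfolding verts_def by blast
  then have "s \<in> A \<times> B"
    using symdiff_subset_E E_subset by auto
  then have yAB: "y \<in> A \<union> B" using s(2) by auto
  show ?thesis
  proof (cases "y \<in> A")
    case True
    then obtain b where b: "(y, b) \<in> M"
      using pm_partner_exists(1)[OF matching yAB] by blast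
    have "(y, b) \<notin> N"
    proof
      assume "(y, b) \<in> N"
      moreover have "s = (y, snd s)"
        using s \<open>s \<in> A \<times> B\<close> True disjoint_A_B by (cases s) auto
      ultimately show False
        using s(1) b pm_partner_unique_A[OF matching] pm_partner_unique_A[OF matching_N]
        unfolding symdiff_def by (metis DiffE UnE)
    qed
    then show ?thesis using b alt_arc_iff by blast
  next
    case False
    then obtain a where a: "(a, y) \<in> N"
      using pm_partner_exists(2)[OF matching_N yAB] yAB by blast
    have "(a, y) \<notin> M"
    proof
      assume "(a, y) \<in> M"
      moreover have "s = (fst s, y)"
        using s \<open>s \<in> A \<times> B\<close> False by (cases s) auto
      ultimately show False
        using s(1) a pm_partner_unique_B[OF matching] pm_partner_unique_B[OF matching_N]
        unfolding symdiff_def by (metis DiffE UnE)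
    qed
    then show ?thesis using a alt_arc_iff by blast
  qed
qed

lemma alt_succ_eq: "alt_arc y z \<Longrightarrow> alt_succ y = z"
  unfolding alt_succ_def using alt_arc_unique by blast

lemma alt_arc_alt_succ: "y \<in> verts (symdiff M N) \<Longrightarrow> alt_arc y (alt_succ y)"
  using alt_arc_exists alt_succ_eq by metis

lemma alt_arc_in_verts: "alt_arc y z \<Longrightarrow> y \<in> verts (symdiff M N) \<and> z \<in> verts (symdiff M N)"
  unfolding alt_arc_def using edge_of_in_verts by metis

lemma finite_alt_verts: "finite (verts (symdiff M N))"
  using finite_subset[OF symdiff_subset_E finite_E] unfolding verts_def by simp

lemma alt_succ_permutes: "alt_succ ` verts (symdiff M N) = verts (symdiff M N)"
  and inj_on_alt_succ: "inj_on alt_succ (verts (symdiff M N))"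
proof -
  show inj: "inj_on alt_succ (verts (symdiff M N))"
    using alt_arc_alt_succ alt_arc_inj by (metis inj_onI)
  have "alt_succ ` verts (symdiff M N) \<subseteq> verts (symdiff M N)"
    using alt_arc_alt_succ alt_arc_in_verts by blast
  then show "alt_succ ` verts (symdiff M N) = verts (symdiff M N)"
    using endo_inj_surj[OF finite_alt_verts _ inj] by blast
qed

lemma alt_succ_edges: "(\<lambda>y. edge_of E y (alt_succ y)) ` verts (symdiff M N) = symdiff M N"
proof
  show "(\<lambda>y. edge_of E y (alt_succ y)) ` verts (symdiff M N) \<subseteq> symdiff M N"
    using alt_arc_alt_succ unfolding alt_arc_def by blast
  show "symdiff M N \<subseteq> (\<lambda>y. edge_of E y (alt_succ y)) ` verts (symdiff M N)"
  proof
    fix s assume s: "s \<in> symdiff M N"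
    then obtain u w where "(u, w) \<in> arcs E M" "edge_of E u w = s"
      using edge_has_arc symdiff_subset_E by blast
    then have "alt_arc u w"
      using s unfolding alt_arc_def by simp
    then show "s \<in> (\<lambda>y. edge_of E y (alt_succ y)) ` verts (symdiff M N)"
      using alt_arc_in_verts alt_succ_eq \<open>edge_of E u w = s\<close> by blast
  qed
qed

lemma is_cycle_of_alt_succ:
  assumes zs: "dcycle E M zs" "cycle_edges E zs \<subseteq> symdiff M N"
  shows "is_cycle_of alt_succ zs"
  unfolding is_cycle_of_def
proof (intro allI impI)
  fix i assume "i < length zs"
  then have "alt_arc (zs ! i) (zs ! ((i + 1) mod length zs))"
    using zs dcycle_arc unfolding alt_arc_def cycle_edges_def by blast
  then show "zs ! ((i + 1) mod length zs) = alt_succ (zs ! i)"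
    using alt_succ_eq by metis
qed

lemma alt_cycle_through:
  assumes y: "y \<in> verts (symdiff M N)"
  obtains zs where "dcycle E M zs" "is_cycle_of alt_succ zs" "y \<in> set zs"
    "set zs \<subseteq> verts (symdiff M N)"
proof -
  have orbit: "(alt_succ ^^ k) y \<in> verts (symdiff M N)" for k
    by (induction k) (use y alt_succ_permutes in auto)
  obtain p where "0 < p" "(alt_succ ^^ p) y = y"
    using inj_on_periodic[OF finite_alt_verts _ inj_on_alt_succ y] alt_succ_permutes by auto
  moreover have "((alt_succ ^^ k) y, alt_succ ((alt_succ ^^ k) y)) \<in> arcs E M" for k
    using alt_arc_alt_succ[OF orbit] unfolding alt_arc_def by blast
  ultimately obtain zs where zs: "dcycle E M zs" "set zs = range (\<lambda>k. (alt_succ ^^ k) y)"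
      "is_cycle_of alt_succ zs"
    using dcycle_of_periodic_successor by metis
  moreover have "y \<in> set zs"
    unfolding zs(2) by (metis funpow_0 rangeI)
  moreover have "set zs \<subseteq> verts (symdiff M N)"
    unfolding zs(2) using orbit by auto
  ultimately show thesis
    using that by blast
qed

lemma alt_cycles_eq_if_meet:
  assumes "is_dcycle E M C1" "C1 \<subseteq> symdiff M N" "is_dcycle E M C2" "C2 \<subseteq> symdiff M N"
    and "C1 \<inter> C2 \<noteq> {}"
  shows "C1 = C2"
proof -
  obtain zs1 zs2 where zs: "dcycle E M zs1" "C1 = cycle_edges E zs1"
    "dcycle E M zs2" "C2 = cycle_edges E zs2"
    using assms(1,3) unfolding is_dcycle_def by blast
  obtain s where "s \<in> C1" "s \<in> C2" using assms(5) by blast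
  then have "fst s \<in> set zs1" "fst s \<in> set zs2"
    using verts_cycle_edges zs unfolding verts_def by auto
  then show ?thesis
    using cycle_edges_eq_if_common_vertex is_cycle_of_alt_succ assms zs by metis
qed

lemma alt_cycle_through_edge:
  assumes "s \<in> symdiff M N"
  obtains C where "is_dcycle E M C" "C \<subseteq> symdiff M N" "s \<in> C"
proof -
  obtain y where y: "y \<in> verts (symdiff M N)" "s = edge_of E y (alt_succ y)"
    using alt_succ_edges assms by blast
  obtain zs where zs: "dcycle E M zs" "is_cycle_of alt_succ zs" "y \<in> set zs"
      "set zs \<subseteq> verts (symdiff M N)"
    using alt_cycle_through[OF y(1)] by blast
  have "cycle_edges E zs \<subseteq> symdiff M N"
    using zs(4) alt_succ_edges unfolding cycle_edges_is_cycle_of[OF zs(2)] by blast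
  moreover have "s \<in> cycle_edges E zs"
    using zs(2,3) y(2) cycle_edges_is_cycle_of by blast
  ultimately show thesis
    using that zs(1) unfolding is_dcycle_def by blast
qed

definition alt_edges :: "'v set \<Rightarrow> 'v edge set" where
  "alt_edges W = (\<lambda>y. edge_of E y (alt_succ y)) ` W"

lemma alt_edges_subset: "W \<subseteq> verts (symdiff M N) \<Longrightarrow> alt_edges W \<subseteq> symdiff M N"
  using alt_succ_edges unfolding alt_edges_def by blast

lemma alt_edges_disjoint:
  assumes "W1 \<subseteq> verts (symdiff M N)" "W2 \<subseteq> verts (symdiff M N)" "W1 \<inter> W2 = {}"
  shows "alt_edges W1 \<inter> alt_edges W2 = {}"
proof (rule ccontr)
  assume "alt_edges W1 \<inter> alt_edges W2 \<noteq> {}"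
  then obtain y1 y2 where y: "y1 \<in> W1" "y2 \<in> W2"
    "edge_of E y1 (alt_succ y1) = edge_of E y2 (alt_succ y2)"
    unfolding alt_edges_def by blast
  moreover have "(y1, alt_succ y1) \<in> arcs E M" "(y2, alt_succ y2) \<in> arcs E M"
    using y assms(1,2) alt_arc_alt_succ unfolding alt_arc_def by blast+
  ultimately have "y1 = y2"
    using arc_eq_if_edge_of_eq by blast
  then show False
    using y assms(3) by blast
qed

lemma wM_symdiff: "wM R M (symdiff M N) = int (card (red R N)) - int (card (red R M))"
proof -
  have finite: "finite M" "finite N"
    using finite_subset[OF _ finite_E] M_subset perfect_matching_subset[OF matching_N] by auto
  have "card (N \<inter> R) = card ((N \<inter> R) \<inter> M) + card ((N \<inter> R) - M)"
    "card (M \<inter> R) = card ((M \<inter> R) \<inter> N) + card ((M \<inter> R) - N)"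
    using card_Int_Diff finite by blast+
  moreover have "(N \<inter> R) \<inter> M = (M \<inter> R) \<inter> N" by auto
  moreover have "Eplus R M (symdiff M N) = (N \<inter> R) - M" "Eminus R M (symdiff M N) = (M \<inter> R) - N"
    unfolding Eplus_def Eminus_def symdiff_def by auto
  ultimately show ?thesis
    unfolding wM_def red_def by simp
qed

lemma wM_alt_edges_remove_cycle:
  assumes W: "finite W" "W \<subseteq> verts (symdiff M N)" "alt_succ ` W = W"
    and zs: "is_cycle_of alt_succ zs" "set zs \<subseteq> W"
  shows "alt_succ ` (W - set zs) = W - set zs"
    and "wM R M (alt_edges W) = wM R M (alt_edges (set zs)) + wM R M (alt_edges (W - set zs))"
proof -
  have "inj_on alt_succ W"
    using inj_on_subset[OF inj_on_alt_succ W(2)] .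
  then have "alt_succ ` (W - set zs) = alt_succ ` W - alt_succ ` set zs"
    by (rule inj_on_image_set_diff[OF _ Diff_subset zs(2)])
  then show "alt_succ ` (W - set zs) = W - set zs"
    using W(3) is_cycle_of_image[OF zs(1)] by simp
  have "alt_edges W = alt_edges (set zs) \<union> alt_edges (W - set zs)"
    using zs(2) unfolding alt_edges_def by blast
  moreover have "alt_edges (set zs) \<inter> alt_edges (W - set zs) = {}"
    using alt_edges_disjoint W(2) zs(2) by (metis Diff_disjoint Diff_subset subset_trans)
  moreover have "finite (alt_edges (set zs))" "finite (alt_edges (W - set zs))"
    using W(1) unfolding alt_edges_def by simp_all
  ultimately show "wM R M (alt_edges W) = wM R M (alt_edges (set zs)) + wM R M (alt_edges (W - set zs))"
    using wM_Un_disjoint by simp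
qed

lemma exists_positive_alt_cycle_in:
  "finite W \<Longrightarrow> W \<subseteq> verts (symdiff M N) \<Longrightarrow> alt_succ ` W = W \<Longrightarrow>
   0 < wM R M (alt_edges W) \<Longrightarrow> \<exists>C. is_dcycle E M C \<and> C \<subseteq> symdiff M N \<and> 0 < wM R M C"
proof (induction "card W" arbitrary: W rule: less_induct)
  case less
  have "W \<noteq> {}"
  proof
    assume "W = {}"
    then have "alt_edges W = {}"
      unfolding alt_edges_def by simp
    then show False
      using less.prems(4) unfolding wM_def Eplus_def Eminus_def by simp
  qed
  then obtain y where y: "y \<in> W" by blast
  obtain zs where zs: "dcycle E M zs" "is_cycle_of alt_succ zs" "y \<in> set zs"
    using alt_cycle_through[of y] y less.prems(2) by blast
  have cyc: "cycle_edges E zs = alt_edges (set zs)"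
    using cycle_edges_is_cycle_of[OF zs(2)] unfolding alt_edges_def .
  have "(alt_succ ^^ k) y \<in> W" for k
    by (induction k) (use y less.prems(3) in auto)
  then have sub: "set zs \<subseteq> W"
    using is_cycle_of_set_eq_orbit[OF zs(2,3)] by auto
  note remove = wM_alt_edges_remove_cycle[OF less.prems(1-3) zs(2) sub]
  show ?case
  proof (cases "0 < wM R M (cycle_edges E zs)")
    case True
    have "cycle_edges E zs \<subseteq> symdiff M N"
      unfolding cyc using sub less.prems(2) by (intro alt_edges_subset) blast
    then show ?thesis
      using True zs(1) unfolding is_dcycle_def by blast
  next
    case False
    then have "0 < wM R M (alt_edges (W - set zs))"
      using less.prems(4) remove(2) unfolding cyc by linarith
    moreover have "card (W - set zs) < card W"
      using less.prems(1) zs(3) y sub by (intro psubset_card_mono) auto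
    moreover have "finite (W - set zs)" "W - set zs \<subseteq> verts (symdiff M N)"
      using less.prems(1,2) by auto
    ultimately show ?thesis
      using less.hyps remove(1) by blast
  qed
qed

lemma exists_positive_alt_cycle:
  assumes "card (red R M) < card (red R N)"
  obtains C where "is_dcycle E M C" "C \<subseteq> symdiff M N" "0 < wM R M C"
proof -
  have "\<exists>C. is_dcycle E M C \<and> C \<subseteq> symdiff M N \<and> 0 < wM R M C"
    using exists_positive_alt_cycle_in[OF finite_alt_verts order_refl alt_succ_permutes] assms
      alt_succ_edges wM_symdiff unfolding alt_edges_def by simp
  then show thesis
    using that by blast
qed

lemma disjoint_alt_cycles_Eplus_card:
  assumes "C1 \<subseteq> symdiff M N" "C2 \<subseteq> symdiff M N" "C1 \<inter> C2 = {}"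
  shows "card (Eplus R M C1) + card (Eplus R M C2) \<le> card (red R N)"
proof -
  have "Eplus R M C1 \<subseteq> E" "Eplus R M C2 \<subseteq> E" "red R N \<subseteq> E"
    using assms symdiff_subset_E perfect_matching_subset[OF matching_N]
    unfolding Eplus_def red_def by auto
  then have finite: "finite (Eplus R M C1)" "finite (Eplus R M C2)" "finite (red R N)"
    using finite_subset finite_E by metis+
  have "card (Eplus R M C1) + card (Eplus R M C2) = card (Eplus R M C1 \<union> Eplus R M C2)"
    using finite assms(3) by (intro card_Un_disjoint[symmetric]) (auto simp: Eplus_def)
  also have "\<dots> \<le> card (red R N)"
    using finite assms(1,2) by (intro card_mono) (auto simp: Eplus_def red_def symdiff_def)
  finally show ?thesis .
qed

end

lemma (in matching_digraph) the_alt_cycle_through: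
  assumes N: "perfect_matching A B E N" and s: "s \<in> symdiff M N"
  defines "C \<equiv> THE C. is_dcycle E M C \<and> C \<subseteq> symdiff M N \<and> s \<in> C"
  shows "is_dcycle E M C \<and> C \<subseteq> symdiff M N \<and> s \<in> C"
proof -
  interpret matching_pair A B E R M N
    using N by unfold_locales
  obtain C' where C': "is_dcycle E M C' \<and> C' \<subseteq> symdiff M N \<and> s \<in> C'"
    using alt_cycle_through_edge[OF s] by blast
  have "C'' = C'" if "is_dcycle E M C'' \<and> C'' \<subseteq> symdiff M N \<and> s \<in> C''" for C''
    using alt_cycles_eq_if_meet[of C'' C'] that C' by blast
  then show ?thesis
    unfolding C_def using C'
    by (intro theI[where P = "\<lambda>C. is_dcycle E M C \<and> C \<subseteq> symdiff M N \<and> s \<in> C"])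
qed

lemma Cplus_spec:
  assumes crit: "critical A B E R k Mstar M Me"
  shows "is_dcycle E M (Cplus E R M Mstar) \<and> Cplus E R M Mstar \<subseteq> symdiff M Mstar
    \<and> 0 < wM R M (Cplus E R M Mstar)"
proof -
  have pm: "bip_graph A B E R" "perfect_matching A B E M" "perfect_matching A B E Mstar"
    and red: "card (red R Mstar) = k" "3 * card (red R M) < k"
    and long: "\<And>C. is_dcycle E M C \<Longrightarrow> 0 < wM R M C \<Longrightarrow> 3 * card (Eplus R M C) > 2 * k"
    using crit unfolding critical_def by auto
  interpret matching_pair A B E R M Mstar
    by unfold_locales (use pm in auto)
  have "card (red R M) < card (red R Mstar)"
    using red by linarith
  then obtain C where C: "is_dcycle E M C" "C \<subseteq> symdiff M Mstar" "0 < wM R M C"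
    by (rule exists_positive_alt_cycle)
  have unique: "C' = C" if C': "is_dcycle E M C'" "C' \<subseteq> symdiff M Mstar" "0 < wM R M C'" for C'
  proof (rule alt_cycles_eq_if_meet[OF C'(1,2) C(1,2)], rule notI)
    assume "C' \<inter> C = {}"
    then have "card (Eplus R M C') + card (Eplus R M C) \<le> k"
      using disjoint_alt_cycles_Eplus_card[OF C'(2) C(2)] red(1) by simp
    then show False
      using long[OF C(1,3)] long[OF C'(1,3)] by linarith
  qed
  show ?thesis
    unfolding Cplus_def
    by (rule theI[where P = "\<lambda>C. is_dcycle E M C \<and> C \<subseteq> symdiff M Mstar \<and> 0 < wM R M C"])
      (use C unique in blast)+
qed

section \<open>The cycle of a jump\<close>

text \<open>
  Following qs and then cs from b around to a gives C_Q: succ is its successor map (arbitrary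
  off its vertices), and kept holds the positions of the edges of cs that C_Q retains.
\<close>

locale jump_shortcut = matching_digraph +
  fixes cs qs :: "'v list" and a b :: nat
  assumes cycle: "dcycle E M cs" and path: "dpath E M qs" "length qs \<ge> 2"
    and ends: "hd qs = cs ! a" "last qs = cs ! b" and a_b: "a < b" "b < length cs"
    and inner: "set (butlast (tl qs)) \<inter> set cs = {}"
begin

abbreviation n where "n \<equiv> length cs"

abbreviation l where "l \<equiv> length qs"

abbreviation cs_edge :: "nat \<Rightarrow> 'v edge" where
  "cs_edge r \<equiv> edge_of E (cs ! r) (cs ! ((r + 1) mod n))"

definition kept :: "nat set" where
  "kept = {..<a} \<union> {b..<n}"

definition succ :: "'v \<Rightarrow> 'v" where
  "succ y = (if y \<in> set (butlast qs) then qs ! Suc (the_inv_into {..<l} ((!) qs) y)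
             else cs ! (Suc (the_inv_into {..<n} ((!) cs) y) mod n))"

lemma distinct_cs: "distinct cs" and distinct_qs: "distinct qs"
  using cycle path unfolding dcycle_def dpath_def by auto

lemma qs_first: "qs ! 0 = cs ! a" and qs_last: "qs ! (l - 1) = cs ! b"
  using ends path(2) hd_conv_nth[of qs] last_conv_nth[of qs] by force+

lemma qs_on_cs:
  assumes "i < l" "qs ! i \<in> set cs"
  shows "i = 0 \<or> i = l - 1"
proof (rule ccontr)
  assume "\<not> (i = 0 \<or> i = l - 1)"
  then have "qs ! i \<in> set (butlast (tl qs))"
    unfolding set_butlast_tl_conv_nth using assms(1) by auto
  then show False
    using inner assms(2) by blast
qed

lemma cs_index_eq: "r < n \<Longrightarrow> r' < n \<Longrightarrow> cs ! r = cs ! r' \<longleftrightarrow> r = r'"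
  using nth_eq_iff_index_eq[OF distinct_cs] .

lemma succ_qs: "i + 1 < l \<Longrightarrow> succ (qs ! i) = qs ! (i + 1)"
  unfolding succ_def using set_butlast_conv_nth[of qs] the_inv_into_nth[OF distinct_qs] by auto

lemma cs_notin_butlast:
  assumes r: "r < n" "r \<noteq> a"
  shows "cs ! r \<notin> set (butlast qs)"
proof
  assume "cs ! r \<in> set (butlast qs)"
  then obtain i where i: "i + 1 < l" "cs ! r = qs ! i"
    unfolding set_butlast_conv_nth by blast
  moreover have "qs ! i \<in> set cs"
    using i(2) r(1) by (metis nth_mem)
  ultimately have "i = 0"
    using qs_on_cs[of i] by auto
  then show False
    using i qs_first cs_index_eq r a_b by simp
qed

lemma succ_cs: "r < n \<Longrightarrow> r \<noteq> a \<Longrightarrow> succ (cs ! r) = cs ! ((r + 1) mod n)"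
  unfolding succ_def using cs_notin_butlast the_inv_into_nth[OF distinct_cs] by simp

lemma qs_arc: "i + 1 < l \<Longrightarrow> (qs ! i, qs ! (i + 1)) \<in> arcs E M"
  using path unfolding dpath_def by blast

lemma cs_arc: "r < n \<Longrightarrow> (cs ! r, cs ! ((r + 1) mod n)) \<in> arcs E M"
  using dcycle_arc[OF cycle] .

lemma kept_succ:
  assumes r: "r \<in> kept"
  shows "(r + 1) mod n \<in> kept \<or> (r + 1) mod n = a"
proof (cases "r + 1 < n")
  case True
  then show ?thesis
    using r unfolding kept_def by auto
next
  case False
  then have "r + 1 = n"
    using r a_b unfolding kept_def by auto
  then show ?thesis
    unfolding kept_def by auto
qed

definition shortcut_verts :: "'v set" where
  "shortcut_verts = set qs \<union> (!) cs ` kept"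

lemma shortcut_verts_cases:
  assumes "y \<in> shortcut_verts"
  obtains (path) i where "i + 1 < l" "y = qs ! i" "succ y = qs ! (i + 1)"
    | (cycle) r where "r \<in> kept" "y = cs ! r" "succ y = cs ! ((r + 1) mod n)"
proof (cases "y \<in> set (butlast qs)")
  case True
  then show thesis
    using path succ_qs set_butlast_conv_nth[of qs] by auto
next
  case False
  have "b \<in> kept" "a \<notin> kept"
    unfolding kept_def using a_b by auto
  moreover have "y = cs ! b" if y: "y \<in> set qs"
  proof -
    obtain i where i: "i < l" "y = qs ! i"
      using y by (auto simp: in_set_conv_nth)
    then have "\<not> i + 1 < l"
      using False unfolding set_butlast_conv_nth by blast
    then have "i = l - 1"
      using i(1) by linarith
    then show ?thesis
      using i(2) qs_last by simp
  qed
  ultimately obtain r where "r \<in> kept" "y = cs ! r"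
    using assms unfolding shortcut_verts_def by auto
  moreover have "r < n" "r \<noteq> a"
    using \<open>r \<in> kept\<close> \<open>a \<notin> kept\<close> a_b unfolding kept_def by auto
  ultimately show thesis
    using cycle succ_cs by blast
qed

lemma succ_in_shortcut_verts:
  assumes "y \<in> shortcut_verts"
  shows "succ y \<in> shortcut_verts \<and> (y, succ y) \<in> arcs E M \<and>
    edge_of E y (succ y) \<in> path_edges E qs \<union> cs_edge ` kept"
  using assms
proof (cases rule: shortcut_verts_cases)
  case (path i)
  then show ?thesis
    unfolding shortcut_verts_def path_edges_def using qs_arc by auto
next
  case (cycle r)
  then have "r < n"
    using a_b unfolding kept_def by auto
  have "cs ! a \<in> set qs"
    using qs_first path(2) by (metis gr_zeroI nth_mem not_numeral_le_zero)
  then have "succ y \<in> shortcut_verts"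
    using cycle kept_succ[OF cycle(1)] unfolding shortcut_verts_def by auto
  then show ?thesis
    using cycle cs_arc[OF \<open>r < n\<close>] by auto
qed

lemma funpow_succ_qs: "i < l \<Longrightarrow> (succ ^^ i) (qs ! 0) = qs ! i"
  by (induction i) (simp_all add: succ_qs)

lemma funpow_succ_cs:
  assumes "r + s < n" "a \<notin> {r..<r + s}"
  shows "(succ ^^ s) (cs ! r) = cs ! (r + s)"
  using assms
proof (induction s)
  case (Suc s)
  then have IH: "(succ ^^ s) (cs ! r) = cs ! (r + s)" and "r + s \<noteq> a"
    by auto
  have "(succ ^^ Suc s) (cs ! r) = succ (cs ! (r + s))"
    using IH by simp
  also have "\<dots> = cs ! (r + Suc s)"
    using Suc.prems \<open>r + s \<noteq> a\<close> succ_cs[of "r + s"] by simp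
  finally show ?case .
qed simp

lemma succ_cs_last: "succ (cs ! (n - 1)) = cs ! 0"
proof -
  have "n - 1 < n" "n - 1 \<noteq> a" "n - 1 + 1 = n"
    using a_b by linarith+
  then show ?thesis
    using succ_cs[of "n - 1"] by simp
qed

lemma shortcut_period: "(succ ^^ (a + 1 + (n - 1 - b) + (l - 1))) (qs ! 0) = qs ! 0"
proof -
  have "(succ ^^ (l - 1)) (qs ! 0) = cs ! b"
    using funpow_succ_qs[of "l - 1"] qs_last path(2) by simp
  moreover have "(succ ^^ (n - 1 - b)) (cs ! b) = cs ! (n - 1)"
    using funpow_succ_cs[of b "n - 1 - b"] a_b by simp
  moreover have "succ (cs ! (n - 1)) = cs ! 0"
    using succ_cs_last .
  moreover have "(succ ^^ a) (cs ! 0) = qs ! 0"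
    using funpow_succ_cs[of 0 a] a_b qs_first by simp
  ultimately show ?thesis
    by (simp only: funpow_add One_nat_def funpow.simps comp_apply id_apply)
qed

lemma shortcut_orbit: "range (\<lambda>k. (succ ^^ k) (qs ! 0)) = shortcut_verts"
proof
  have "qs ! 0 \<in> shortcut_verts"
    using path(2) unfolding shortcut_verts_def by (auto intro: nth_mem)
  then have "(succ ^^ k) (qs ! 0) \<in> shortcut_verts" for k
    by (induction k) (simp_all add: succ_in_shortcut_verts)
  then show "range (\<lambda>k. (succ ^^ k) (qs ! 0)) \<subseteq> shortcut_verts"
    by blast
next
  let ?orbit = "range (\<lambda>k. (succ ^^ k) (qs ! 0))"
  note closed = funpow_mem_orbit[of _ succ "qs ! 0"]
  have qs: "qs ! i \<in> ?orbit" if "i < l" for i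
    using funpow_succ_qs[OF that] by (metis rangeI)
  have "l - 1 < l" "0 < l"
    using path(2) by auto
  then have "cs ! b \<in> ?orbit"
    using qs qs_last by metis
  then have "cs ! (n - 1) \<in> ?orbit"
    using closed[of "cs ! b" "n - 1 - b"] funpow_succ_cs[of b "n - 1 - b"] a_b by simp
  then have "succ (cs ! (n - 1)) \<in> ?orbit"
    using closed[of "cs ! (n - 1)" 1] by simp
  then have "cs ! 0 \<in> ?orbit"
    unfolding succ_cs_last .
  show "shortcut_verts \<subseteq> ?orbit"
  proof
    fix y assume "y \<in> shortcut_verts"
    then consider "y \<in> set qs" | r where "r < a" "y = cs ! r" | r where "b \<le> r" "r < n" "y = cs ! r"
      unfolding shortcut_verts_def kept_def by auto
    then show "y \<in> ?orbit"
    proof cases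
      case 1
      then show ?thesis using qs by (auto simp: in_set_conv_nth)
    next
      case (2 r)
      then show ?thesis
        using closed[OF \<open>cs ! 0 \<in> ?orbit\<close>, of r] funpow_succ_cs[of 0 r] a_b by simp
    next
      case (3 r)
      then show ?thesis
        using closed[OF \<open>cs ! b \<in> ?orbit\<close>, of "r - b"] funpow_succ_cs[of b "r - b"] a_b by simp
    qed
  qed
qed

lemma shortcut_edges: "(\<lambda>y. edge_of E y (succ y)) ` shortcut_verts = path_edges E qs \<union> cs_edge ` kept"
proof
  show "(\<lambda>y. edge_of E y (succ y)) ` shortcut_verts \<subseteq> path_edges E qs \<union> cs_edge ` kept"
    using succ_in_shortcut_verts by blast
  have "path_edges E qs \<subseteq> (\<lambda>y. edge_of E y (succ y)) ` shortcut_verts"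
  proof
    fix s assume "s \<in> path_edges E qs"
    then obtain i where i: "i + 1 < l" "s = edge_of E (qs ! i) (qs ! (i + 1))"
      unfolding path_edges_def by blast
    then have "qs ! i \<in> shortcut_verts" "s = edge_of E (qs ! i) (succ (qs ! i))"
      using succ_qs unfolding shortcut_verts_def by auto
    then show "s \<in> (\<lambda>y. edge_of E y (succ y)) ` shortcut_verts"
      by blast
  qed
  moreover have "cs_edge r \<in> (\<lambda>y. edge_of E y (succ y)) ` shortcut_verts" if r: "r \<in> kept" for r
  proof -
    have "r < n" "r \<noteq> a"
      using r a_b unfolding kept_def by auto
    then have "cs_edge r = edge_of E (cs ! r) (succ (cs ! r))"
      using succ_cs by simp
    moreover have "cs ! r \<in> shortcut_verts"
      using r unfolding shortcut_verts_def by blast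
    ultimately show ?thesis
      by blast
  qed
  ultimately show "path_edges E qs \<union> cs_edge ` kept \<subseteq> (\<lambda>y. edge_of E y (succ y)) ` shortcut_verts"
    by blast
qed

lemma shortcut_cycle:
  obtains zs where "dcycle E M zs" "is_cycle_of succ zs" "qs ! 0 \<in> set zs"
    "cycle_edges E zs = path_edges E qs \<union> cs_edge ` kept"
proof -
  have "((succ ^^ k) (qs ! 0), succ ((succ ^^ k) (qs ! 0))) \<in> arcs E M" for k
    using succ_in_shortcut_verts shortcut_orbit by blast
  then obtain zs where zs: "dcycle E M zs" "set zs = shortcut_verts" "is_cycle_of succ zs"
    using dcycle_of_periodic_successor[OF shortcut_period] shortcut_orbit by auto
  moreover have "qs ! 0 \<in> shortcut_verts"
    using path(2) unfolding shortcut_verts_def by (auto intro: nth_mem)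
  ultimately show thesis
    using that cycle_edges_is_cycle_of[OF zs(3)] shortcut_edges by auto
qed

lemma is_cycle_of_succ:
  assumes ws: "dcycle E M ws" "cycle_edges E ws \<subseteq> cycle_edges E cs \<union> path_edges E qs"
    and path_in: "path_edges E qs \<subseteq> cycle_edges E ws"
  shows "is_cycle_of succ ws" "qs ! 0 \<in> set ws"
proof -
  define k where "k = length ws"
  have ws_arc: "(ws ! i, ws ! ((i + 1) mod k)) \<in> arcs E M" if "i < k" for i
    using dcycle_arc[OF ws(1)] that unfolding k_def by simp
  have "edge_of E (qs ! 0) (qs ! 1) \<in> path_edges E qs"
    using path(2) unfolding path_edges_def by force
  then obtain i0 where i0: "i0 < k" "edge_of E (qs ! 0) (qs ! 1) = edge_of E (ws ! i0) (ws ! ((i0 + 1) mod k))"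
    using path_in cycle_edges_obtain unfolding k_def by blast
  then have first: "ws ! i0 = qs ! 0" "ws ! ((i0 + 1) mod k) = qs ! 1"
    using arc_eq_if_edge_of_eq[OF qs_arc[of 0] ws_arc[OF i0(1)]] path(2) by auto
  then show "qs ! 0 \<in> set ws"
    using i0(1) unfolding k_def by (metis nth_mem)
  show "is_cycle_of succ ws"
    unfolding is_cycle_of_def k_def[symmetric]
  proof (intro allI impI)
    fix i assume i: "i < k"
    have "edge_of E (ws ! i) (ws ! ((i + 1) mod k)) \<in> cycle_edges E cs \<union> path_edges E qs"
      using ws(2) i unfolding cycle_edges_def k_def by blast
    then consider j where "j + 1 < l" "ws ! i = qs ! j" "ws ! ((i + 1) mod k) = qs ! (j + 1)"
      | r where "r < n" "ws ! i = cs ! r" "ws ! ((i + 1) mod k) = cs ! ((r + 1) mod n)"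
      unfolding cycle_edges_def path_edges_def
      using arc_eq_if_edge_of_eq[OF ws_arc[OF i]] qs_arc cs_arc by blast
    then show "ws ! ((i + 1) mod k) = succ (ws ! i)"
    proof cases
      case (1 j)
      then show ?thesis using succ_qs by simp
    next
      case (2 r)
      show ?thesis
      proof (cases "r = a")
        case False
        then show ?thesis using 2 succ_cs by simp
      next
        case True
        then have "i = i0"
          using 2 first qs_first nth_eq_iff_index_eq[of ws i i0] ws(1) i i0(1)
          unfolding dcycle_def k_def by simp
        then show ?thesis
          using first succ_qs[of 0] path(2) by simp
      qed
    qed
  qed
qed

lemma CQ_shortcut: "CQ E M (cycle_edges E cs) (path_edges E qs) = path_edges E qs \<union> cs_edge ` kept"
proof -
  obtain zs where zs: "dcycle E M zs" "is_cycle_of succ zs" "qs ! 0 \<in> set zs"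
    "cycle_edges E zs = path_edges E qs \<union> cs_edge ` kept"
    by (rule shortcut_cycle)
  have "cs_edge ` kept \<subseteq> cycle_edges E cs"
    unfolding cycle_edges_def kept_def using a_b by auto
  then have zs_cycle: "is_dcycle E M (cycle_edges E zs) \<and>
      cycle_edges E zs \<subseteq> cycle_edges E cs \<union> path_edges E qs \<and> path_edges E qs \<subseteq> cycle_edges E zs"
    using zs unfolding is_dcycle_def by auto
  have unique: "D = cycle_edges E zs"
    if D: "is_dcycle E M D \<and> D \<subseteq> cycle_edges E cs \<union> path_edges E qs \<and> path_edges E qs \<subseteq> D" for D
  proof -
    obtain ws where "dcycle E M ws" "D = cycle_edges E ws"
      using D unfolding is_dcycle_def by blast
    then show ?thesis
      using is_cycle_of_succ[of ws] D cycle_edges_eq_if_common_vertex[OF _ zs(2) _ zs(3)] by metis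
  qed
  show ?thesis
    unfolding CQ_def zs(4)[symmetric]
    by (rule the_equality[where P = "\<lambda>C. is_dcycle E M C \<and> C \<subseteq> cycle_edges E cs \<union> path_edges E qs
        \<and> path_edges E qs \<subseteq> C"]) (use zs_cycle unique in blast)+
qed

lemma path_edges_disjoint_cycle_edges:
  assumes p: "a \<le> p" "p < b" "cs_edge p \<notin> path_edges E qs"
  shows "path_edges E qs \<inter> cycle_edges E cs = {}"
proof (rule ccontr)
  assume "path_edges E qs \<inter> cycle_edges E cs \<noteq> {}"
  then obtain i r where i: "i + 1 < l" and r: "r < n"
    and eq: "edge_of E (qs ! i) (qs ! (i + 1)) = cs_edge r"
    unfolding path_edges_def cycle_edges_def by blast
  then have qs_cs: "qs ! i = cs ! r" "qs ! (i + 1) = cs ! ((r + 1) mod n)"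
    using arc_eq_if_edge_of_eq[OF qs_arc[OF i] cs_arc[OF r]] by auto
  have "(r + 1) mod n < n"
    using mod_less_divisor[of n "r + 1"] r by linarith
  then have "qs ! i \<in> set cs" "qs ! (i + 1) \<in> set cs"
    using qs_cs r by simp_all
  then have "i = 0" "i + 1 = l - 1"
    using qs_on_cs[of i] qs_on_cs[of "i + 1"] i by auto
  then have "r = a" "(r + 1) mod n = b"
    using qs_cs qs_first qs_last cs_index_eq r a_b \<open>(r + 1) mod n < n\<close> by auto
  then have "r = p"
    using p a_b by (auto simp: mod_if split: if_splits)
  then show False
    using p(3) eq i unfolding path_edges_def by auto
qed

lemma cs_edge_notin_CQ:
  assumes "a \<le> p" "p < b" "cs_edge p \<notin> path_edges E qs"
  shows "cs_edge p \<notin> CQ E M (cycle_edges E cs) (path_edges E qs)"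
proof
  assume "cs_edge p \<in> CQ E M (cycle_edges E cs) (path_edges E qs)"
  then obtain r where "r \<in> kept" "cs_edge p = cs_edge r"
    using assms(3) unfolding CQ_shortcut by blast
  moreover have "r < n" "p < n"
    using \<open>r \<in> kept\<close> assms a_b unfolding kept_def by auto
  ultimately have "r = p"
    using cycle_edge_index_inj[OF cycle, of r p] by simp
  then show False
    using \<open>r \<in> kept\<close> assms unfolding kept_def by auto
qed

lemma last_cs_edge_in_CQ: "cs_edge (n - 1) \<in> CQ E M (cycle_edges E cs) (path_edges E qs)"
proof -
  have "n - 1 \<in> kept"
    using a_b unfolding kept_def by auto
  then show ?thesis
    unfolding CQ_shortcut by blast
qed

end

section \<open>Covering C^+ by reaches of forward jumps\<close>

lemma (in matching_digraph) exists_jump_separating: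
  assumes cs: "dcycle E M cs" and ds: "dcycle E M ds"
    and first: "ds ! 0 = cs ! 0" and last: "ds ! (length ds - 1) = cs ! (length cs - 1)"
    and x: "x \<in> cycle_edges E cs" "x \<notin> cycle_edges E ds"
  obtains Q where "is_jump E M (cycle_edges E cs) (cycle_edges E ds) Q"
    "x \<notin> CQ E M (cycle_edges E cs) Q"
    "edge_of E (cs ! (length cs - 1)) (cs ! 0) \<in> CQ E M (cycle_edges E cs) Q"
proof -
  obtain p where p: "p + 1 < length cs" "x = edge_of E (cs ! p) (cs ! (p + 1))"
    by (rule non_shared_edge_not_closing[OF assms])
  obtain qs a b where qs: "dpath E M qs" "length qs \<ge> 2" "path_edges E qs \<subseteq> cycle_edges E ds"
    and ends: "hd qs = cs ! a" "last qs = cs ! b" and p_between: "a \<le> p" "p < b" "b < length cs"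
    and inner: "set (butlast (tl qs)) \<inter> set cs = {}"
    by (rule exists_jump_across[OF cs ds first last p(1)])
  have shortcut: "jump_shortcut A B E R M cs qs a b"
    using qs ends p_between inner cs by unfold_locales auto
  have "x \<notin> path_edges E qs"
    using qs(3) x(2) by blast
  then have "path_edges E qs \<inter> cycle_edges E cs = {}"
    using jump_shortcut.path_edges_disjoint_cycle_edges[OF shortcut p_between(1,2)] p by simp
  moreover have "hd qs \<in> set cs" "last qs \<in> set cs"
    using ends p_between p(1) by auto
  ultimately have "is_jump E M (cycle_edges E cs) (cycle_edges E ds) (path_edges E qs)"
    using is_jump_of_segment[OF cs qs] inner by blast
  moreover have "x \<notin> CQ E M (cycle_edges E cs) (path_edges E qs)"
    using jump_shortcut.cs_edge_notin_CQ[OF shortcut p_between(1,2)] \<open>x \<notin> path_edges E qs\<close> p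
    by simp
  moreover have "length cs - 1 + 1 = length cs"
    using p(1) by linarith
  then have "edge_of E (cs ! (length cs - 1)) (cs ! 0) \<in> CQ E M (cycle_edges E cs) (path_edges E qs)"
    using jump_shortcut.last_cs_edge_in_CQ[OF shortcut] by simp
  ultimately show thesis
    using that by blast
qed

lemma separating_jump_is_forward:
  assumes Q: "is_jump E M Cp C Q" and x: "x \<in> Cp" "x \<notin> CQ E M Cp Q"
    and e: "e \<in> Cp" "e \<in> CQ E M Cp Q" and not_back: "e \<notin> reach_back E R M Cp C"
  shows "forward_jump E R M Cp Q" "x \<in> reach E R M Cp Q" "e \<notin> reach E R M Cp Q"
proof -
  have "Q \<inter> Cp = {}"
    using Q unfolding is_jump_def by blast
  then have e_reach: "e \<in> CQ E M Cp Q - Q"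
    using e by blast
  show forward: "forward_jump E R M Cp Q"
  proof (rule ccontr)
    assume backward: "\<not> forward_jump E R M Cp Q"
    then have "e \<in> reach E R M Cp Q"
      unfolding reach_def using e_reach by simp
    then have "e \<in> reach_back E R M Cp C"
      unfolding reach_back_def using Q backward by blast
    then show False
      using not_back by contradiction
  qed
  show "x \<in> reach E R M Cp Q" "e \<notin> reach E R M Cp Q"
    unfolding reach_def using forward x e_reach by auto
qed

lemma (in matching_digraph) edge_in_interjump_or_forward_reach:
  assumes Cp: "is_dcycle E M Cp" and C: "is_dcycle E M C"
    and e: "e \<in> Cp" "e \<in> C" and not_back: "e \<notin> reach_back E R M Cp C"
    and x: "x \<in> Cp"
  shows "(\<exists>P \<in> interjumps E M Cp C. x \<in> P) \<or>
    (\<exists>Q. is_jump E M Cp C Q \<and> forward_jump E R M Cp Q \<and>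
      x \<in> reach E R M Cp Q \<and> e \<notin> reach E R M Cp Q)"
proof -
  obtain cs0 ds0 where cs0: "dcycle E M cs0" "Cp = cycle_edges E cs0"
    and ds0: "dcycle E M ds0" "C = cycle_edges E ds0"
    using Cp C unfolding is_dcycle_def by blast
  show ?thesis
  proof (cases "x \<in> C")
    case True
    have "finite C" "x \<in> E"
      using ds0(2) finite_cycle_edges x cycle_edges_subset_E[OF cs0(1)] cs0(2) by auto
    then show ?thesis
      using interjump_through True x by (metis (no_types, lifting))
  next
    case False
    obtain t h where th: "(t, h) \<in> arcs E M" "edge_of E t h = e"
      using edge_has_arc cycle_edges_subset_E[OF cs0(1)] cs0(2) e(1) by blast
    obtain cs where cs: "dcycle E M cs" "cycle_edges E cs = Cp" "cs ! 0 = h" "cs ! (length cs - 1) = t"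
      using dcycle_rotate_to_arc[OF cs0(1) th(1)] th(2) e(1) cs0(2) by metis
    obtain ds where ds: "dcycle E M ds" "cycle_edges E ds = C" "ds ! 0 = h" "ds ! (length ds - 1) = t"
      using dcycle_rotate_to_arc[OF ds0(1) th(1)] th(2) e(2) ds0(2) by metis
    have "ds ! 0 = cs ! 0" "ds ! (length ds - 1) = cs ! (length cs - 1)"
      using cs ds by simp_all
    moreover have "x \<in> cycle_edges E cs" "x \<notin> cycle_edges E ds"
      using x False cs(2) ds(2) by simp_all
    ultimately obtain Q where Q: "is_jump E M Cp C Q" "x \<notin> CQ E M Cp Q"
      "edge_of E (cs ! (length cs - 1)) (cs ! 0) \<in> CQ E M Cp Q"
      using exists_jump_separating[OF cs(1) ds(1)] unfolding cs(2) ds(2) by blast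
    have "e \<in> CQ E M Cp Q"
      using Q(3) cs(3,4) th(2) by simp
    then show ?thesis
      using separating_jump_is_forward[OF Q(1) x Q(2) e(1) _ not_back] Q(1) by blast
  qed
qed

lemma (in matching_digraph) cycle_covered_by_forward_jumps:
  assumes Cp: "is_dcycle E M Cp" and C: "is_dcycle E M C"
    and e: "e \<in> Cp" "e \<in> C" and not_back: "e \<notin> reach_back E R M Cp C"
  shows "\<exists>QQ. (\<forall>Q \<in> QQ. is_jump E M Cp C Q \<and> forward_jump E R M Cp Q)
    \<and> Cp = (\<Union>Q \<in> QQ. reach E R M Cp Q) \<union> \<Union> (interjumps E M Cp C)
    \<and> (\<forall>Q \<in> QQ. e \<notin> reach E R M Cp Q)"
proof -
  define QQ where "QQ = {Q. is_jump E M Cp C Q \<and> forward_jump E R M Cp Q \<and> e \<notin> reach E R M Cp Q}"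
  have "Cp \<subseteq> (\<Union>Q \<in> QQ. reach E R M Cp Q) \<union> \<Union> (interjumps E M Cp C)"
    using edge_in_interjump_or_forward_reach[OF Cp C e not_back] unfolding QQ_def by blast
  moreover have "reach E R M Cp Q \<subseteq> Cp" if "Q \<in> QQ" for Q
    using that unfolding QQ_def reach_def by auto
  moreover have "P \<subseteq> Cp" if "P \<in> interjumps E M Cp C" for P
    using that unfolding interjumps_def by auto
  ultimately have "Cp = (\<Union>Q \<in> QQ. reach E R M Cp Q) \<union> \<Union> (interjumps E M Cp C)"
    by blast
  then show ?thesis
    by (intro exI[of _ QQ] conjI) (auto simp: QQ_def simp del: Un_iff)
qed

theorem lemma6:
  fixes A B :: "'v set" and E R M Mstar :: "'v edge set" and k :: nat
    and Me :: "'v edge \<Rightarrow> 'v edge set" and e :: "'v edge"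
  assumes Me: "\<forall>f \<in> E. is_min_red_pm A B E R f (Me f)"
    and crit: "critical A B E R k Mstar M Me"
    and e: "e \<in> Eplus R M (Cplus E R M Mstar)"
    and nb: "e \<notin> reach_back E R M (Cplus E R M Mstar) (Ce E M Me e)"
  shows "\<exists>QQ. (\<forall>Q \<in> QQ. is_jump E M (Cplus E R M Mstar) (Ce E M Me e) Q
                     \<and> forward_jump E R M (Cplus E R M Mstar) Q)
            \<and> Cplus E R M Mstar = (\<Union>Q \<in> QQ. reach E R M (Cplus E R M Mstar) Q)
                 \<union> \<Union> (interjumps E M (Cplus E R M Mstar) (Ce E M Me e))
            \<and> (\<forall>Q \<in> QQ. e \<notin> reach E R M (Cplus E R M Mstar) Q)"
proof -
  have "bip_graph A B E R" "perfect_matching A B E M" "perfect_matching A B E Mstar"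
    using crit unfolding critical_def by auto
  then interpret matching_digraph A B E R M
    by unfold_locales
  have Cplus: "is_dcycle E M (Cplus E R M Mstar)" "Cplus E R M Mstar \<subseteq> symdiff M Mstar"
    using Cplus_spec[OF crit] by auto
  have e_Cplus: "e \<in> Cplus E R M Mstar" and "e \<notin> M"
    using e unfolding Eplus_def by auto
  then have "e \<in> E"
    using Cplus(2) M_subset perfect_matching_subset[OF \<open>perfect_matching A B E Mstar\<close>]
    unfolding symdiff_def by blast
  then have Me_e: "perfect_matching A B E (Me e)" "e \<in> Me e"
    using Me unfolding is_min_red_pm_def by auto
  then have "e \<in> symdiff M (Me e)"
    using \<open>e \<notin> M\<close> unfolding symdiff_def by blast
  then have "is_dcycle E M (Ce E M Me e) \<and> Ce E M Me e \<subseteq> symdiff M (Me e) \<and> e \<in> Ce E M Me e"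
    unfolding Ce_def by (rule the_alt_cycle_through[OF Me_e(1)])
  then show ?thesis
    using cycle_covered_by_forward_jumps[OF Cplus(1) _ e_Cplus _ nb] by blast
qed

end
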